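(* Let $n\geq 0$ and $0\leq l\leq n$ be integers. Then \[ \sum_{k=1}^{n}{n\brack k}\frac{(q/z;q)_k (zq^{-l};q)_{n-k}}{1-q^k} z^k =(zq^{-l};q)_n\left(\sum_{k=1}^{n-l}\frac{zq^{k-1}}{1-zq^{k-1}}-\sum_{k=1}^n\frac{q^k}{1-q^k}\right). \]
   Context: For $N\geq 0$, $(x;q)_N=(1-x)(1-xq)\cdots(1-xq^{N-1})$ (with $(x;q)_0=1$). The $q$-binomial coefficient is ${n\brack k}=\frac{(q;q)_n}{(q;q)_k(q;q)_{n-k}}$ for $0\leq k\leq n$ and $0$ otherwise. The identity is one of rational functions in $q$ and $z$. *)

theory Defs
  imports Complex_Main
begin

definition qpoch :: "'a::field \<Rightarrow> 'a \<Rightarrow> nat \<Rightarrow> 'a" where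
  "qpoch x q N = (\<Prod>i<N. 1 - x * q ^ i)"

definition qbinom :: "'a::field \<Rightarrow> nat \<Rightarrow> nat \<Rightarrow> 'a" where
  "qbinom q n k = (if k \<le> n then qpoch q q n / (qpoch q q k * qpoch q q (n - k)) else 0)"

end

theory Submission
  imports Defs
begin

text \<open>Let F n w = qbinom_sum q n w (cor_coeff q z) be the left-hand side with z q^-l replaced by
  a free parameter w. Splitting the first factor off (w;q)_(n-k) and applying q-Pascal gives
    F (n+1) w = F (n+1) (w q) - w (1 - q^(n+1)) F n (w q),
  and when w q^n = z/q a q-Chu-Vandermonde sum vanishes, giving
    F (n+1) w = (1 - w) F n (w q) - q^(n+1) (w;q)_(n+1) / (1 - q^(n+1)).
  The right-hand side cor_rhs q z n l satisfies the same two recurrences at w = z q^-l, so the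
  identity follows by induction on n and, for fixed n, by descending induction on l from l = n.\<close>

lemma qpoch_0 [simp]: "qpoch x q 0 = 1"
  by (simp add: qpoch_def)

lemma qpoch_Suc: "qpoch x q (Suc m) = qpoch x q m * (1 - x * q ^ m)"
  by (simp add: qpoch_def)

lemma qpoch_Suc_left: "qpoch x q (Suc m) = (1 - x) * qpoch (x * q) q m"
  unfolding qpoch_def prod.lessThan_Suc_shift by (simp add: ac_simps)

lemma qpoch_eq_qpoch_mult_minus:
  "qpoch x q m = qpoch (x * q) q m - x * (1 - q ^ m) * qpoch (x * q) q (m - 1)"
proof (cases m)
  case (Suc m')
  then show ?thesis
    unfolding Suc qpoch_Suc_left[of x q m'] qpoch_Suc[of "x * q" q m'] by (simp add: algebra_simps)
qed simp

lemma qpoch_q_q_nonzero_iff: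
  "qpoch q q n \<noteq> 0 \<longleftrightarrow> (\<forall>k. 1 \<le> k \<longrightarrow> k \<le> n \<longrightarrow> 1 - q ^ k \<noteq> 0)"
proof -
  have "{..<n} = (\<lambda>k. k - 1) ` {1..n}"
    by (auto simp: image_iff intro!: bexI[where x = "Suc _"])
  then show ?thesis
    by (auto simp: qpoch_def prod_zero_iff simp flip: power_Suc)
qed

lemma qpoch_q_q_nonzero_mono: "qpoch q q n \<noteq> 0 \<Longrightarrow> m \<le> n \<Longrightarrow> qpoch q q m \<noteq> 0"
  by (simp add: qpoch_q_q_nonzero_iff)

lemma qbinom_0: "qpoch q q n \<noteq> 0 \<Longrightarrow> qbinom q n 0 = 1"
  by (simp add: qbinom_def)

lemma qbinom_self: "qpoch q q n \<noteq> 0 \<Longrightarrow> qbinom q n n = 1"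
  by (simp add: qbinom_def)

lemma qbinom_eq_0: "n < k \<Longrightarrow> qbinom q n k = 0"
  by (simp add: qbinom_def)

lemma qbinom_Suc_Suc:
  fixes q :: "'a::field"
  assumes nz: "qpoch q q (Suc n) \<noteq> 0"
  shows "qbinom q (Suc n) (Suc k) = qbinom q n k + q ^ Suc k * qbinom q n (Suc k)"
proof -
  consider "n < k" | "k = n" | "k < n" by linarith
  then show ?thesis
  proof cases
    case 3
    then obtain j where n: "n = Suc (k + j)" using less_imp_Suc_add by blast
    define Qk Qj Qn where "Qk = qpoch q q k" and "Qj = qpoch q q j" and "Qn = qpoch q q n"
    have "qpoch q q (Suc k) \<noteq> 0" "qpoch q q (Suc j) \<noteq> 0"
      using n by (simp_all add: qpoch_q_q_nonzero_mono[OF nz])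
    then have nonzero: "Qk \<noteq> 0" "Qj \<noteq> 0" "1 - q ^ Suc k \<noteq> 0" "1 - q ^ Suc j \<noteq> 0"
      by (auto simp: Qk_def Qj_def qpoch_Suc)
    have lhs: "qbinom q (Suc n) (Suc k) = Qn * (1 - q ^ Suc k * q ^ Suc j)
        / (Qk * (1 - q ^ Suc k) * (Qj * (1 - q ^ Suc j)))"
      by (simp add: qbinom_def n qpoch_Suc Qk_def Qj_def Qn_def Suc_diff_le power_add)
    have rhs1: "qbinom q n k = Qn / (Qk * (Qj * (1 - q ^ Suc j)))"
      by (simp add: qbinom_def n qpoch_Suc Qk_def Qj_def Qn_def Suc_diff_le)
    have rhs2: "qbinom q n (Suc k) = Qn / (Qk * (1 - q ^ Suc k) * Qj)"
      by (simp add: qbinom_def n qpoch_Suc Qk_def Qj_def Qn_def)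
    show ?thesis
      unfolding lhs rhs1 rhs2 using nonzero by (simp add: divide_simps) algebra
  qed (use nz qpoch_q_q_nonzero_mono[OF nz, of n] in \<open>simp_all add: qbinom_eq_0 qbinom_self\<close>)
qed

lemma qbinom_mult_one_minus_power:
  fixes q :: "'a::field"
  assumes nz: "qpoch q q (Suc n) \<noteq> 0" and k: "k \<le> Suc n"
  shows "qbinom q n k * (1 - q ^ Suc n) = qbinom q (Suc n) k * (1 - q ^ (Suc n - k))"
proof (cases "k = Suc n")
  case False
  then obtain j where j: "n = k + j" using k le_Suc_ex by fastforce
  have "qpoch q q k \<noteq> 0" "qpoch q q (Suc j) \<noteq> 0"
    using j by (simp_all add: qpoch_q_q_nonzero_mono[OF nz])
  then have "qpoch q q k \<noteq> 0" "qpoch q q j \<noteq> 0" "1 - q ^ Suc j \<noteq> 0"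
    by (auto simp: qpoch_Suc)
  then show ?thesis
    by (simp add: qbinom_def j Suc_diff_le qpoch_Suc field_simps)
qed (simp add: qbinom_eq_0)

lemma sum_qbinom_Suc:
  fixes q :: "'a::field"
  assumes nz: "qpoch q q (Suc n) \<noteq> 0"
  shows "(\<Sum>k\<le>Suc n. qbinom q (Suc n) k * f k) = (\<Sum>k\<le>n. qbinom q n k * (f (Suc k) + q ^ k * f k))"
proof -
  have "(\<Sum>k\<le>Suc n. qbinom q (Suc n) k * f k)
      = (\<Sum>k\<le>n. qbinom q (Suc n) (Suc k) * f (Suc k)) + f 0"
    unfolding sum.atMost_Suc_shift using nz by (simp add: qbinom_0)
  also have "\<dots> = (\<Sum>k\<le>n. qbinom q n k * f (Suc k))
      + ((\<Sum>k\<le>n. q ^ Suc k * qbinom q n (Suc k) * f (Suc k)) + f 0)"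
    by (simp add: qbinom_Suc_Suc[OF nz] sum.distrib distrib_right)
  also have "(\<Sum>k\<le>n. q ^ Suc k * qbinom q n (Suc k) * f (Suc k)) + f 0
      = (\<Sum>k\<le>Suc n. q ^ k * qbinom q n k * f k)"
    unfolding sum.atMost_Suc_shift[of "\<lambda>k. q ^ k * qbinom q n k * f k"]
    using qpoch_q_q_nonzero_mono[OF nz, of n] by (simp add: qbinom_0)
  also have "\<dots> = (\<Sum>k\<le>n. q ^ k * qbinom q n k * f k)"
    by (simp add: qbinom_eq_0)
  finally show ?thesis by (simp only: distrib_left sum.distrib mult.assoc mult.left_commute)
qed

lemma q_Chu_Vandermonde:
  fixes a b c q :: "'a::field"
  assumes ac: "a * c = 1" and nz: "qpoch q q n \<noteq> 0"
  shows "(\<Sum>k\<le>n. qbinom q n k * (qpoch a q k * qpoch b q (n - k) * c ^ k)) = (\<Prod>m<n. c - b * q ^ m)"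
  using nz
proof (induction n)
  case 0
  then show ?case by (simp add: qbinom_0)
next
  case (Suc n)
  define T where "T n k = qpoch a q k * qpoch b q (n - k) * c ^ k" for n k
  have "T (Suc n) (Suc k) + q ^ k * T (Suc n) k = T n k * (c - b * q ^ n)" if "k \<le> n" for k
  proof -
    have "T (Suc n) (Suc k) = T n k * (c * (1 - a * q ^ k))"
      by (simp add: T_def qpoch_Suc)
    moreover have "T (Suc n) k = T n k * (1 - b * q ^ (n - k))"
      using that by (simp add: T_def qpoch_Suc Suc_diff_le)
    moreover have "c * (1 - a * q ^ k) + q ^ k * (1 - b * q ^ (n - k)) = c - b * q ^ n"
      using ac that by (simp add: algebra_simps flip: power_add)
    ultimately show ?thesis
      by (metis distrib_left mult.left_commute)
  qed
  then have "(\<Sum>k\<le>Suc n. qbinom q (Suc n) k * T (Suc n) k)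
      = (\<Sum>k\<le>n. qbinom q n k * T n k) * (c - b * q ^ n)"
    by (simp add: sum_qbinom_Suc[OF Suc.prems] sum_distrib_right mult.assoc del: sum.atMost_Suc)
  moreover have "qpoch q q n \<noteq> 0"
    using Suc.prems by (rule qpoch_q_q_nonzero_mono) simp
  ultimately show ?case
    using Suc.IH by (simp add: T_def)
qed

lemma qbinom_Suc_diff:
  fixes q :: "'a::field"
  assumes nz: "qpoch q q (Suc n) \<noteq> 0" and k: "k \<le> Suc n"
  shows "qbinom q (Suc n) k - qbinom q n k
    = qbinom q (Suc n) k * q ^ (Suc n - k) * (1 - q ^ k) / (1 - q ^ Suc n)"
proof -
  have "1 - q ^ Suc n \<noteq> 0"
    using nz by (simp add: qpoch_q_q_nonzero_iff del: power_Suc)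
  moreover have "q ^ Suc n = q ^ k * q ^ (Suc n - k)"
    using k by (simp flip: power_add)
  ultimately show ?thesis
    using qbinom_mult_one_minus_power[OF nz k] by (simp add: field_simps)
qed

definition qbinom_sum :: "'a::field \<Rightarrow> nat \<Rightarrow> 'a \<Rightarrow> (nat \<Rightarrow> 'a) \<Rightarrow> 'a" where
  "qbinom_sum q n w c = (\<Sum>k = 1..n. qbinom q n k * qpoch w q (n - k) * c k)"

lemma qbinom_sum_Suc_upper:
  "qbinom_sum q n w c = (\<Sum>k = 1..Suc n. qbinom q n k * qpoch w q (n - k) * c k)"
  by (simp add: qbinom_sum_def qbinom_eq_0)

lemma qbinom_sum_Suc_shift:
  fixes q :: "'a::field"
  assumes nz: "qpoch q q (Suc n) \<noteq> 0"
  shows "qbinom_sum q (Suc n) w c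
    = qbinom_sum q (Suc n) (w * q) c - w * (1 - q ^ Suc n) * qbinom_sum q n (w * q) c"
  unfolding qbinom_sum_Suc_upper[of q n]
  unfolding qbinom_sum_def sum_distrib_left sum_subtractf[symmetric]
proof (intro sum.cong refl)
  fix k assume "k \<in> {1..Suc n}"
  then have k: "k \<le> Suc n" by simp
  have binom: "w * (1 - q ^ Suc n) * (qbinom q n k * qpoch (w * q) q (n - k) * c k)
      = w * (qbinom q (Suc n) k * (1 - q ^ (Suc n - k))) * qpoch (w * q) q (n - k) * c k"
    using qbinom_mult_one_minus_power[OF nz k] by (simp add: ac_simps)
  have poch: "qpoch w q (Suc n - k)
      = qpoch (w * q) q (Suc n - k) - w * (1 - q ^ (Suc n - k)) * qpoch (w * q) q (n - k)"
    using qpoch_eq_qpoch_mult_minus[of w q "Suc n - k"] by simp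
  show "qbinom q (Suc n) k * qpoch w q (Suc n - k) * c k
      = qbinom q (Suc n) k * qpoch (w * q) q (Suc n - k) * c k
        - w * (1 - q ^ Suc n) * (qbinom q n k * qpoch (w * q) q (n - k) * c k)"
    unfolding binom poch by (simp add: algebra_simps)
qed

lemma qbinom_sum_Suc_diff:
  fixes q :: "'a::field"
  assumes nz: "qpoch q q (Suc n) \<noteq> 0"
  shows "qbinom_sum q (Suc n) w c - (1 - w) * qbinom_sum q n (w * q) c
    = (\<Sum>k = 1..Suc n.
        qbinom q (Suc n) k * qpoch w q (Suc n - k) * q ^ (Suc n - k) * (1 - q ^ k) * c k)
      / (1 - q ^ Suc n)"
proof -
  have poch: "(1 - w) * (qbinom q n k * qpoch (w * q) q (n - k) * c k)
      = qbinom q n k * qpoch w q (Suc n - k) * c k" for k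
    by (cases "k \<le> n") (simp_all add: Suc_diff_le qpoch_Suc_left qbinom_eq_0)
  have "qbinom_sum q (Suc n) w c - (1 - w) * qbinom_sum q n (w * q) c
      = (\<Sum>k = 1..Suc n. (qbinom q (Suc n) k - qbinom q n k) * qpoch w q (Suc n - k) * c k)"
    unfolding qbinom_sum_Suc_upper[of q n] unfolding qbinom_sum_def sum_distrib_left poch
    by (simp add: algebra_simps sum_subtractf)
  also have "\<dots> = (\<Sum>k = 1..Suc n. qbinom q (Suc n) k * qpoch w q (Suc n - k) * q ^ (Suc n - k)
      * (1 - q ^ k) * c k / (1 - q ^ Suc n))"
    by (intro sum.cong refl) (simp add: qbinom_Suc_diff[OF nz] divide_simps ac_simps)
  finally show ?thesis
    by (simp only: sum_divide_distrib)
qed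

definition cor_coeff :: "'a::field \<Rightarrow> 'a \<Rightarrow> nat \<Rightarrow> 'a" where
  "cor_coeff q z k = qpoch (q / z) q k * z ^ k / (1 - q ^ k)"

lemma qbinom_sum_cor_coeff_Suc_root:
  fixes q :: "'a::field"
  assumes nz: "qpoch q q (Suc n) \<noteq> 0" and "q \<noteq> 0" "z \<noteq> 0"
    and root: "w * q ^ n = z / q"
  shows "qbinom_sum q (Suc n) w (cor_coeff q z)
    = (1 - w) * qbinom_sum q n (w * q) (cor_coeff q z)
      - q ^ Suc n * qpoch w q (Suc n) / (1 - q ^ Suc n)"
proof -
  let ?S = "\<lambda>k. qbinom q (Suc n) k * (qpoch (q / z) q k * qpoch w q (Suc n - k) * (z / q) ^ k)"
  have "qbinom q (Suc n) k * qpoch w q (Suc n - k) * q ^ (Suc n - k) * (1 - q ^ k) * cor_coeff q z k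
      = q ^ Suc n * ?S k" if "k \<in> {1..Suc n}" for k
  proof -
    have "1 - q ^ k \<noteq> 0"
      using that nz by (simp add: qpoch_q_q_nonzero_iff del: power_Suc)
    moreover have "q ^ Suc n = q ^ k * q ^ (Suc n - k)"
      using that by (simp flip: power_add)
    ultimately show ?thesis
      using \<open>q \<noteq> 0\<close> by (simp add: cor_coeff_def field_simps power_divide)
  qed
  then have "(\<Sum>k = 1..Suc n. qbinom q (Suc n) k * qpoch w q (Suc n - k) * q ^ (Suc n - k)
      * (1 - q ^ k) * cor_coeff q z k) = q ^ Suc n * (\<Sum>k = 1..Suc n. ?S k)"
    unfolding sum_distrib_left by (rule sum.cong[OF refl])
  also have "(\<Sum>k = 1..Suc n. ?S k) = (\<Sum>k\<le>Suc n. ?S k) - qpoch w q (Suc n)"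
    using nz
    by (simp add: atMost_atLeast0 sum.atLeast_Suc_atMost[of 0] qbinom_0 del: sum.cl_ivl_Suc)
  also have "(\<Sum>k\<le>Suc n. ?S k) = (\<Prod>m<Suc n. z / q - w * q ^ m)"
    using assms by (intro q_Chu_Vandermonde) simp_all
  also have "\<dots> = 0"
    using root by (simp add: prod_zero_iff)
  finally have "qbinom_sum q (Suc n) w (cor_coeff q z)
      - (1 - w) * qbinom_sum q n (w * q) (cor_coeff q z)
      = q ^ Suc n * (0 - qpoch w q (Suc n)) / (1 - q ^ Suc n)"
    by (simp only: qbinom_sum_Suc_diff[where n = n, OF nz])
  then show ?thesis
    by (simp add: diff_eq_eq algebra_simps)
qed

definition cor_rhs :: "'a::field \<Rightarrow> 'a \<Rightarrow> nat \<Rightarrow> nat \<Rightarrow> 'a" where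
  "cor_rhs q z n l = qpoch (z / q ^ l) q n *
     ((\<Sum>k = 1..n - l. z * q ^ (k - 1) / (1 - z * q ^ (k - 1))) - (\<Sum>k = 1..n. q ^ k / (1 - q ^ k)))"

lemma cor_rhs_Suc_top:
  fixes q :: "'a::field"
  assumes "q \<noteq> 0"
  shows "cor_rhs q z (Suc n) (Suc n) = (1 - z / q ^ Suc n) * cor_rhs q z n n
    - q ^ Suc n * qpoch (z / q ^ Suc n) q (Suc n) / (1 - q ^ Suc n)"
proof -
  define w P B where "w = z / q ^ Suc n" and "P = qpoch (z / q ^ n) q n"
    and "B = (\<Sum>k = 1..n. q ^ k / (1 - q ^ k))"
  have "w * q = z / q ^ n"
    using assms by (simp add: w_def)
  then have poch: "qpoch w q (Suc n) = (1 - w) * P"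
    by (simp only: qpoch_Suc_left P_def)
  have "cor_rhs q z (Suc n) (Suc n) = (1 - w) * P * (0 - (B + q ^ Suc n / (1 - q ^ Suc n)))"
    unfolding cor_rhs_def w_def[symmetric] by (simp add: poch B_def)
  moreover have "cor_rhs q z n n = P * (0 - B)"
    by (simp add: cor_rhs_def P_def B_def)
  ultimately show ?thesis
    unfolding w_def[symmetric] poch by (simp add: algebra_simps)
qed

lemma cor_rhs_Suc_shift:
  fixes q :: "'a::field"
  assumes "q \<noteq> 0" and "l \<le> n" and "1 - z * q ^ (n - l) \<noteq> 0" and "1 - q ^ Suc n \<noteq> 0"
  shows "cor_rhs q z (Suc n) l
    = cor_rhs q z (Suc n) (Suc l) + z / q ^ Suc l * (1 - q ^ Suc n) * cor_rhs q z n l"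
proof -
  define w t u where "w = z / q ^ Suc l" and "t = q ^ Suc n" and "u = z * q ^ (n - l)"
  define P A B where "P = qpoch (z / q ^ l) q n"
    and "A = (\<Sum>k = 1..n - l. z * q ^ (k - 1) / (1 - z * q ^ (k - 1)))"
    and "B = (\<Sum>k = 1..n. q ^ k / (1 - q ^ k))"
  have "u = w * t" and shift_last: "z / q ^ l * q ^ n = u" and shift_first: "w * q = z / q ^ l"
    using assms(1,2) by (simp_all add: w_def t_def u_def field_simps flip: power_add)
  have poch_l: "qpoch (z / q ^ l) q (Suc n) = P * (1 - w * t)"
    by (simp only: P_def qpoch_Suc shift_last \<open>u = w * t\<close>)
  have poch_w: "qpoch w q (Suc n) = (1 - w) * P"
    by (simp only: P_def qpoch_Suc_left shift_first)
  have "Suc n - l = Suc (n - l)" "Suc n - Suc l = n - l"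
    using assms(2) by simp_all
  then have lhs: "cor_rhs q z (Suc n) l
      = P * (1 - w * t) * (A + w * t / (1 - w * t) - (B + t / (1 - t)))"
    and rhs1: "cor_rhs q z (Suc n) (Suc l) = (1 - w) * P * (A - (B + t / (1 - t)))"
    and rhs2: "cor_rhs q z n l = P * (A - B)"
    unfolding cor_rhs_def w_def[symmetric] t_def[symmetric] poch_l poch_w
    using \<open>u = w * t\<close> by (simp_all add: A_def B_def P_def t_def u_def)
  have "1 - w * t \<noteq> 0" "1 - t \<noteq> 0"
    using assms(3,4) \<open>u = w * t\<close> by (simp_all add: u_def t_def)
  then show ?thesis
    unfolding w_def[symmetric] t_def[symmetric] lhs rhs1 rhs2 by (simp add: divide_simps) algebra
qed

theorem qbinom_sum_cor_coeff_eq_cor_rhs: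
  fixes q z :: "'a::field"
  assumes "q \<noteq> 0" "z \<noteq> 0" "l \<le> n" "qpoch q q n \<noteq> 0"
    and "\<And>j. j < n - l \<Longrightarrow> 1 - z * q ^ j \<noteq> 0"
  shows "qbinom_sum q n (z / q ^ l) (cor_coeff q z) = cor_rhs q z n l"
  using assms(3-)
proof (induction n arbitrary: l)
  case 0
  then show ?case by (simp add: qbinom_sum_def cor_rhs_def)
next
  case (Suc n)
  note nz = Suc.prems(2)
  have "1 - q ^ Suc n \<noteq> 0"
    using nz by (simp add: qpoch_q_q_nonzero_iff del: power_Suc)
  from Suc.prems(1) show ?case
  proof (induction l rule: inc_induct)
    case base
    let ?w = "z / q ^ Suc n"
    have root: "?w * q ^ n = z / q" and shift: "?w * q = z / q ^ n"
      using \<open>q \<noteq> 0\<close> by simp_all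
    have "qbinom_sum q (Suc n) ?w (cor_coeff q z)
        = (1 - ?w) * qbinom_sum q n (z / q ^ n) (cor_coeff q z)
          - q ^ Suc n * qpoch ?w q (Suc n) / (1 - q ^ Suc n)"
      using qbinom_sum_cor_coeff_Suc_root[OF nz \<open>q \<noteq> 0\<close> \<open>z \<noteq> 0\<close> root]
      unfolding shift .
    also have "qbinom_sum q n (z / q ^ n) (cor_coeff q z) = cor_rhs q z n n"
      using Suc.IH[of n] qpoch_q_q_nonzero_mono[OF nz] by simp
    finally show ?case
      using cor_rhs_Suc_top[OF \<open>q \<noteq> 0\<close>] by simp
  next
    case (step l')
    let ?w = "z / q ^ Suc l'"
    have "?w * q = z / q ^ l'"
      using \<open>q \<noteq> 0\<close> by simp
    then have "qbinom_sum q (Suc n) (z / q ^ l') (cor_coeff q z)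
        = qbinom_sum q (Suc n) ?w (cor_coeff q z)
          + ?w * (1 - q ^ Suc n) * qbinom_sum q n (z / q ^ l') (cor_coeff q z)"
      using qbinom_sum_Suc_shift[OF nz, where w = ?w] by simp
    also have "qbinom_sum q n (z / q ^ l') (cor_coeff q z) = cor_rhs q z n l'"
      using Suc.IH[of l'] Suc.prems step.hyps qpoch_q_q_nonzero_mono[OF nz] by simp
    also have "qbinom_sum q (Suc n) ?w (cor_coeff q z) = cor_rhs q z (Suc n) (Suc l')"
      by (fact step.IH)
    also have "cor_rhs q z (Suc n) (Suc l') + ?w * (1 - q ^ Suc n) * cor_rhs q z n l'
        = cor_rhs q z (Suc n) l'"
      using cor_rhs_Suc_shift[OF \<open>q \<noteq> 0\<close>] Suc.prems step.hyps \<open>1 - q ^ Suc n \<noteq> 0\<close> by simp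
    finally show ?case .
  qed
qed

theorem corollary3p2:
  fixes q z :: complex and n l :: nat
  assumes "l \<le> n"
    and "q \<noteq> 0" and "z \<noteq> 0"
    and "\<And>k. 1 \<le> k \<Longrightarrow> k \<le> n \<Longrightarrow> 1 - q ^ k \<noteq> 0"
    and "\<And>k. 1 \<le> k \<Longrightarrow> k \<le> n - l \<Longrightarrow> 1 - z * q ^ (k - 1) \<noteq> 0"
  shows "(\<Sum>k = 1..n. qbinom q n k * qpoch (q / z) q k * qpoch (z * q powi (- int l)) q (n - k)
              / (1 - q ^ k) * z ^ k)
         = qpoch (z * q powi (- int l)) q n *
           ((\<Sum>k = 1..n - l. z * q ^ (k - 1) / (1 - z * q ^ (k - 1)))
            - (\<Sum>k = 1..n. q ^ k / (1 - q ^ k)))"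
proof -
  have "z * q powi (- int l) = z / q ^ l"
    by (simp add: power_int_minus divide_inverse)
  moreover have "qbinom_sum q n (z / q ^ l) (cor_coeff q z) = cor_rhs q z n l"
  proof (rule qbinom_sum_cor_coeff_eq_cor_rhs)
    show "qpoch q q n \<noteq> 0"
      using assms(4) by (simp add: qpoch_q_q_nonzero_iff)
    show "1 - z * q ^ j \<noteq> 0" if "j < n - l" for j
      using assms(5)[of "Suc j"] that by simp
  qed (use assms in auto)
  ultimately show ?thesis
    by (simp add: qbinom_sum_def cor_coeff_def cor_rhs_def ac_simps)
qed

end
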